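(* Let $\Omega\subset\mathbb{R}^N$ be a bounded domain, $\delta>0$, and let $G$ be a domain with $\overline G\subset\Omega$, $\partial G\in C^1$, $G$ satisfying the interior sphere condition and $\partial G=\Gamma_\delta$. Then: (i) $\Omega=G+B_\delta(0)=\{x+y: x\in G,\ y\in B_\delta(0)\}$; (ii) for any unit vector $\xi$ and $\lambda\in\mathbb{R}$, if $\mathcal{R}_\lambda(G_\lambda)\subset G$ then $\mathcal{R}_\lambda(\Omega_\lambda)\subset\Omega$.
   Context: $d(x)=\min_{y\in\mathbb{R}^N\setminus\Omega}|x-y|$ and $\Gamma_\delta=\{x\in\Omega:d(x)=\delta\}$. For a unit vector $\xi$ and $\lambda\in\mathbb{R}$, $\mathcal{R}_\lambda x=x+2(\lambda-x\cdot\xi)\xi$ is the reflection in the hyperplane $\{x\cdot\xi=\lambda\}$, and $G_\lambda=\{x\in G: x\cdot\xi>\lambda\}$, $\Omega_\lambda=\{x\in\Omega: x\cdot\xi>\lambda\}$. *)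

theory Defs
  imports "HOL-Analysis.Analysis"
begin

definition is_domain :: "'a::euclidean_space set \<Rightarrow> bool" where
  "is_domain S \<longleftrightarrow> S \<noteq> {} \<and> open S \<and> connected S"

definition dist_bdry :: "'a::euclidean_space set \<Rightarrow> 'a \<Rightarrow> real" where
  "dist_bdry \<Omega> x = infdist x (- \<Omega>)"

definition Gamma :: "'a::euclidean_space set \<Rightarrow> real \<Rightarrow> 'a set" where
  "Gamma \<Omega> \<delta> = {x \<in> \<Omega>. dist_bdry \<Omega> x = \<delta>}"

definition refl_hp :: "'a::euclidean_space \<Rightarrow> real \<Rightarrow> 'a \<Rightarrow> 'a" where
  "refl_hp \<xi> lam x = x + (2 * (lam - x \<bullet> \<xi>)) *\<^sub>R \<xi>"

definition cap :: "'a::euclidean_space set \<Rightarrow> 'a \<Rightarrow> real \<Rightarrow> 'a set" where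
  "cap S \<xi> lam = {x \<in> S. x \<bullet> \<xi> > lam}"

definition C1_fun :: "('a::euclidean_space \<Rightarrow> real) \<Rightarrow> bool" where
  "C1_fun \<phi> \<longleftrightarrow> (\<exists>\<phi>'. (\<forall>x. (\<phi> has_derivative blinfun_apply (\<phi>' x)) (at x))
                       \<and> continuous_on UNIV \<phi>')"

text \<open>C^1 boundary: near every boundary point p, after choosing a unit direction nu
  (a rotated coordinate system), G is the region above the graph of a C^1 function
  defined on the hyperplane orthogonal to nu.\<close>
definition C1_boundary :: "'a::euclidean_space set \<Rightarrow> bool" where
  "C1_boundary G \<longleftrightarrow>
     (\<forall>p\<in>frontier G. \<exists>r \<nu> \<phi>. r > 0 \<and> norm \<nu> = 1 \<and> C1_fun \<phi> \<and>
        G \<inter> ball p r = {x \<in> ball p r. x \<bullet> \<nu> > \<phi> (x - (x \<bullet> \<nu>) *\<^sub>R \<nu>)})"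

definition interior_sphere_condition :: "'a::euclidean_space set \<Rightarrow> bool" where
  "interior_sphere_condition G \<longleftrightarrow>
     (\<forall>p\<in>frontier G. \<exists>c r. r > 0 \<and> ball c r \<subseteq> G \<and> p \<in> sphere c r)"

end

theory Submission
  imports Defs
begin

(* Write G \<oplus> B_\<delta> for {x + y | x \<in> G, |y| < \<delta>}, i.e. the set of points at
   distance < \<delta> from some point of G.
   (a) Every point of G has distance \<ge> \<delta> from the complement of \<Omega>: a segment from a point
       of G to a closer point outside \<Omega> would cross \<partial>G = \<Gamma>_\<delta>.  Hence G \<oplus> B_\<delta> \<subseteq> \<Omega>.
   (b) No point x of \<Omega> has distance exactly \<delta> from G: the nearest point g of closure G to
       x lies on \<partial>G; both x and the nearest point z of the complement of \<Omega> to g are at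
       distance \<delta> from g and at distance \<ge> \<delta> from the interior ball touching \<partial>G at g,
       and such a point is unique (tangency), so x = z, which is impossible.
   (c) By connectedness of \<Omega>, (b) forces dist(x, G) < \<delta> on all of \<Omega>, so \<Omega> = G \<oplus> B_\<delta>.
   (ii) A reflection is an isometry, and it does not increase the distance between a point
       beyond the hyperplane and a point on its near side; so reflecting G \<oplus> B_\<delta> stays
       inside G \<oplus> B_\<delta> as soon as reflecting the cap of G stays inside G. *)

lemma infdist_lessE:
  assumes "A \<noteq> {}" "infdist x A < d"
  obtains a where "a \<in> A" "dist x a < d"
  using assms by (auto simp: infdist_notempty cINF_less_iff)

lemma mem_sum_ball_iff:
  fixes G :: "'a::real_normed_vector set"
  shows "q \<in> {x + y | x y. x \<in> G \<and> y \<in> ball 0 \<delta>} \<longleftrightarrow> (\<exists>g\<in>G. dist q g < \<delta>)"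
proof
  assume "q \<in> {x + y | x y. x \<in> G \<and> y \<in> ball 0 \<delta>}"
  then obtain g y where "q = g + y" "g \<in> G" "norm y < \<delta>" by auto
  then show "\<exists>g\<in>G. dist q g < \<delta>" by (intro bexI[of _ g]) (auto simp: dist_norm)
next
  assume "\<exists>g\<in>G. dist q g < \<delta>"
  then obtain g where "g \<in> G" "dist q g < \<delta>" by blast
  then have "q = g + (q - g) \<and> g \<in> G \<and> q - g \<in> ball 0 \<delta>"
    by (simp add: dist_norm norm_minus_commute)
  then show "q \<in> {x + y | x y. x \<in> G \<and> y \<in> ball 0 \<delta>}" by blast
qed

(* A point of an open set is never a nearest point of that set to another point:
   moving slightly towards x stays in G and gets strictly closer. *)
lemma open_no_nearest_point:
  fixes x g :: "'a::real_normed_vector"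
  assumes "open G" "g \<in> G" "x \<noteq> g"
  obtains p where "p \<in> G" "dist x p < dist x g"
proof -
  obtain e where e: "e > 0" "ball g e \<subseteq> G" using assms open_contains_ball by blast
  define a where "a = dist x g"
  have a: "a > 0" using assms(3) by (simp add: a_def)
  define t where "t = min (1/2) (e / (2 * a))"
  have t: "0 < t" "t < 1" "t * a < e" using e a by (auto simp: t_def min_def field_simps)
  define p where "p = g + t *\<^sub>R (x - g)"
  have "dist g p = t * a" using t by (simp add: p_def a_def dist_norm norm_minus_commute)
  then have "p \<in> G" using e t by auto
  have "x - p = (1 - t) *\<^sub>R (x - g)" by (simp add: p_def algebra_simps)
  then have "dist x p = (1 - t) * a" using t by (simp add: dist_norm a_def)
  also have "\<dots> < a" using t a by simp
  finally show ?thesis using \<open>p \<in> G\<close> that by (simp add: a_def)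
qed

lemma far_from_ball_imp_far_from_centre:
  fixes w c :: "'a::real_normed_vector"
  assumes r: "r > 0" and \<delta>: "\<delta> > 0" and far: "\<And>p. p \<in> ball c r \<Longrightarrow> dist w p \<ge> \<delta>"
  shows "dist w c \<ge> r + \<delta>"
proof (rule ccontr)
  assume "\<not> ?thesis"
  then have lt: "dist w c < r + \<delta>" by simp
  define a where "a = dist w c"
  have ar: "a \<ge> r"
  proof (rule ccontr)
    assume "\<not> a \<ge> r"
    then have "w \<in> ball c r" by (simp add: a_def dist_commute)
    from far[OF this] \<delta> show False by simp
  qed
  with r have a: "a > 0" by simp
  define t where "t = (max 0 (a - \<delta>) + r) / 2"
  have t: "0 < t" "t < r" "a - \<delta> < t" using lt r \<delta> by (auto simp: t_def a_def)
  define p where "p = c + (t / a) *\<^sub>R (w - c)"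
  have "dist c p = t" using a t by (simp add: p_def a_def dist_norm norm_minus_commute)
  then have p: "p \<in> ball c r" using t by simp
  have "w - p = (1 - t / a) *\<^sub>R (w - c)" by (simp add: p_def algebra_simps)
  then have "dist w p = (1 - t / a) * a" using t ar a by (simp add: dist_norm a_def)
  also have "\<dots> = a - t" using a by (simp add: field_simps)
  finally have "dist w p < \<delta>" using t by simp
  with far[OF p] show False by simp
qed

lemma tangent_point:
  fixes w g c :: "'a::real_inner"
  assumes r: "r > 0" and \<delta>: "\<delta> > 0" and wg: "dist w g = \<delta>" and cg: "dist c g = r"
    and far: "\<And>p. p \<in> ball c r \<Longrightarrow> dist w p \<ge> \<delta>"
  shows "w = g + (\<delta> / r) *\<^sub>R (g - c)"
proof -
  have "dist w c \<ge> r + \<delta>" by (rule far_from_ball_imp_far_from_centre[OF r \<delta> far])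
  moreover have "dist g c = r" using cg by (simp add: dist_commute)
  ultimately have "dist w c = dist w g + dist g c" using dist_triangle[of w c g] wg by linarith
  then have "norm (w - g) *\<^sub>R (g - c) = norm (g - c) *\<^sub>R (w - g)"
    using dist_triangle_eq by blast
  then have "\<delta> *\<^sub>R (g - c) = r *\<^sub>R (w - g)"
    using wg cg by (simp add: dist_norm norm_minus_commute)
  then have "(1/r) *\<^sub>R (\<delta> *\<^sub>R (g - c)) = w - g" using r by simp
  then show ?thesis by (simp add: algebra_simps)
qed

lemma refl_hp_inner:
  fixes \<xi> :: "'a::euclidean_space"
  assumes "norm \<xi> = 1"
  shows "refl_hp \<xi> lam x \<bullet> \<xi> - lam = - (x \<bullet> \<xi> - lam)"
  using assms by (simp add: refl_hp_def inner_add_left norm_eq_1 algebra_simps)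

lemma refl_hp_dist_sq:
  fixes \<xi> :: "'a::euclidean_space"
  assumes "norm \<xi> = 1"
  shows "(dist (refl_hp \<xi> lam x) y)\<^sup>2 = (dist x y)\<^sup>2 + 4 * ((x \<bullet> \<xi> - lam) * (y \<bullet> \<xi> - lam))"
proof -
  define a where "a = x \<bullet> \<xi> - lam"
  define b where "b = y \<bullet> \<xi> - lam"
  have \<xi>: "\<xi> \<bullet> \<xi> = 1" using assms by (simp add: norm_eq_1)
  have diff: "refl_hp \<xi> lam x - y = (x - y) - (2 * a) *\<^sub>R \<xi>"
    by (simp add: refl_hp_def a_def algebra_simps)
  have dxy: "(dist x y)\<^sup>2 = (x - y) \<bullet> (x - y)" by (simp add: dist_norm power2_norm_eq_inner)
  have "(dist (refl_hp \<xi> lam x) y)\<^sup>2 = ((x - y) - (2 * a) *\<^sub>R \<xi>) \<bullet> ((x - y) - (2 * a) *\<^sub>R \<xi>)"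
    by (simp add: dist_norm diff power2_norm_eq_inner)
  also have "\<dots> = (x - y) \<bullet> (x - y) - 4 * a * ((x - y) \<bullet> \<xi>) + 4 * a\<^sup>2 * (\<xi> \<bullet> \<xi>)"
    by (simp add: inner_diff_left inner_diff_right inner_commute power2_eq_square algebra_simps)
  also have "\<dots> = (x - y) \<bullet> (x - y) + 4 * (a * b)"
    by (simp add: \<xi> a_def b_def inner_diff_left power2_eq_square algebra_simps)
  finally show ?thesis by (simp add: a_def b_def dxy)
qed

lemma refl_hp_dist:
  fixes \<xi> :: "'a::euclidean_space"
  assumes "norm \<xi> = 1"
  shows "dist (refl_hp \<xi> lam x) (refl_hp \<xi> lam y) = dist x y"
proof -
  define a where "a = x \<bullet> \<xi> - lam"
  define b where "b = y \<bullet> \<xi> - lam"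
  have "(dist (refl_hp \<xi> lam x) (refl_hp \<xi> lam y))\<^sup>2 = (dist x (refl_hp \<xi> lam y))\<^sup>2 + 4 * (a * - b)"
    using refl_hp_dist_sq[OF assms, of lam x "refl_hp \<xi> lam y"] refl_hp_inner[OF assms, of lam y]
    by (simp add: a_def b_def)
  also have "(dist x (refl_hp \<xi> lam y))\<^sup>2 = (dist x y)\<^sup>2 + 4 * (b * a)"
    using refl_hp_dist_sq[OF assms, of lam y x] by (simp add: dist_commute a_def b_def)
  finally have "(dist (refl_hp \<xi> lam x) (refl_hp \<xi> lam y))\<^sup>2 = (dist x y)\<^sup>2"
    by (simp add: algebra_simps)
  then show ?thesis by (simp add: power2_eq_iff_nonneg)
qed

lemma refl_hp_dist_le_across:
  fixes \<xi> :: "'a::euclidean_space"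
  assumes "norm \<xi> = 1" "x \<bullet> \<xi> > lam" "y \<bullet> \<xi> \<le> lam"
  shows "dist (refl_hp \<xi> lam x) y \<le> dist x y"
proof -
  have "(x \<bullet> \<xi> - lam) * (y \<bullet> \<xi> - lam) \<le> 0"
    using assms(2,3) by (simp add: mult_nonneg_nonpos)
  then have "(dist (refl_hp \<xi> lam x) y)\<^sup>2 \<le> (dist x y)\<^sup>2"
    using refl_hp_dist_sq[OF assms(1), of lam x y] by linarith
  then show ?thesis by (rule power2_le_imp_le) simp
qed

lemma sum_ball_reflection:
  fixes G :: "'a::euclidean_space set"
  assumes \<xi>: "norm \<xi> = 1" and RG: "refl_hp \<xi> lam ` cap G \<xi> lam \<subseteq> G"
    and \<Omega>: "\<Omega> = {x + y | x y. x \<in> G \<and> y \<in> ball 0 \<delta>}"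
  shows "refl_hp \<xi> lam ` cap \<Omega> \<xi> lam \<subseteq> \<Omega>"
proof
  fix q assume "q \<in> refl_hp \<xi> lam ` cap \<Omega> \<xi> lam"
  then obtain x where x: "x \<in> \<Omega>" "x \<bullet> \<xi> > lam" "q = refl_hp \<xi> lam x"
    by (auto simp: cap_def)
  then obtain g where g: "g \<in> G" "dist x g < \<delta>" unfolding \<Omega> mem_sum_ball_iff by blast
  have "\<exists>g'\<in>G. dist q g' < \<delta>"
  proof (cases "g \<bullet> \<xi> > lam")
    case True
    then have "refl_hp \<xi> lam g \<in> G" using RG g(1) by (auto simp: cap_def)
    moreover have "dist q (refl_hp \<xi> lam g) < \<delta>" using g(2) x(3) refl_hp_dist[OF \<xi>] by simp
    ultimately show ?thesis by blast
  next
    case False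
    then have "dist q g \<le> dist x g" using refl_hp_dist_le_across[OF \<xi> x(2), of g] x(3) by simp
    then have "dist q g < \<delta>" using g(2) by simp
    with g(1) show ?thesis by blast
  qed
  then show "q \<in> \<Omega>" unfolding \<Omega> mem_sum_ball_iff .
qed

(* Step (a): if the boundary of G keeps distance \<ge> \<delta> from a set C disjoint from G,
   so does all of G, since a segment from G to a closer point of C crosses \<partial>G. *)
lemma infdist_ge_from_frontier:
  fixes G C :: "'a::euclidean_space set"
  assumes "C \<noteq> {}" "G \<inter> C = {}" and front: "\<And>p. p \<in> frontier G \<Longrightarrow> infdist p C \<ge> \<delta>"
    and "p \<in> G"
  shows "infdist p C \<ge> \<delta>"
proof (rule ccontr)
  assume "\<not> ?thesis"
  then have "infdist p C < \<delta>" by simp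
  then obtain z where z: "z \<in> C" "dist p z < \<delta>" by (rule infdist_lessE[OF assms(1)])
  have "closed_segment p z \<inter> G \<noteq> {}" "closed_segment p z - G \<noteq> {}"
    using assms(2,4) z(1) by auto
  then obtain w where w: "w \<in> closed_segment p z" "w \<in> frontier G"
    using connected_Int_frontier[OF connected_segment] by blast
  have "infdist w C \<le> dist w z" using z(1) by (rule infdist_le)
  also have "\<dots> \<le> dist p z" using dist_in_closed_segment[OF w(1)] by simp
  finally show False using front[OF w(2)] z(2) by simp
qed

lemma sum_ball_subset:
  fixes G \<Omega> :: "'a::euclidean_space set"
  assumes "- \<Omega> \<noteq> {}" "G \<subseteq> \<Omega>" "\<And>p. p \<in> frontier G \<Longrightarrow> infdist p (- \<Omega>) \<ge> \<delta>"
  shows "{x + y | x y. x \<in> G \<and> y \<in> ball 0 \<delta>} \<subseteq> \<Omega>"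
proof
  fix q assume "q \<in> {x + y | x y. x \<in> G \<and> y \<in> ball 0 \<delta>}"
  then obtain g where g: "g \<in> G" "dist q g < \<delta>" unfolding mem_sum_ball_iff by blast
  have far: "infdist g (- \<Omega>) \<ge> \<delta>"
    using infdist_ge_from_frontier[of "- \<Omega>" G] assms g(1) by blast
  show "q \<in> \<Omega>"
  proof (rule ccontr)
    assume "q \<notin> \<Omega>"
    then have "infdist g (- \<Omega>) \<le> dist g q" by (intro infdist_le) simp
    with far g(2) show False by (simp add: dist_commute)
  qed
qed

(* Step (b): under the interior sphere condition, if \<partial>G is at distance exactly \<delta> from
   a closed set C and G at distance \<ge> \<delta>, then every point at distance \<delta> from G lies in C:
   it coincides with the nearest point of C to its nearest boundary point of G. *)
lemma level_set_in_closed: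
  fixes G C :: "'a::euclidean_space set"
  assumes oG: "open G" and ISC: "interior_sphere_condition G" and \<delta>: "\<delta> > 0"
    and C: "closed C" "C \<noteq> {}"
    and inner: "\<And>p. p \<in> G \<Longrightarrow> infdist p C \<ge> \<delta>"
    and front: "\<And>p. p \<in> frontier G \<Longrightarrow> infdist p C = \<delta>"
    and level: "infdist x G = \<delta>"
  shows "x \<in> C"
proof -
  have "G \<noteq> {}" using level \<delta> by (auto simp: infdist_def)
  then obtain g where g: "g \<in> closure G" "infdist x (closure G) = dist x g"
    using infdist_attains_inf[of "closure G" x] by blast
  have xg: "dist x g = \<delta>" using g level by (simp add: infdist_eq_setdist)
  have farx: "dist x p \<ge> \<delta>" if "p \<in> G" for p
    using infdist_le[OF that, of x] level by simp
  have "g \<notin> G"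
  proof
    assume "g \<in> G"
    moreover have "x \<noteq> g" using xg \<delta> by auto
    ultimately obtain p where "p \<in> G" "dist x p < dist x g" using open_no_nearest_point oG by blast
    with farx[of p] xg show False by simp
  qed
  then have gF: "g \<in> frontier G" using g(1) oG by (simp add: frontier_def interior_open)
  obtain z where z: "z \<in> C" "infdist g C = dist g z"
    using infdist_attains_inf[OF C] by blast
  have zg: "dist z g = \<delta>" using z front[OF gF] by (simp add: dist_commute)
  have farz: "dist z p \<ge> \<delta>" if "p \<in> G" for p
    using infdist_le[OF z(1), of p] inner[OF that] by (simp add: dist_commute)
  obtain c r where cr: "r > 0" "ball c r \<subseteq> G" "g \<in> sphere c r"
    using ISC gF unfolding interior_sphere_condition_def by blast
  have cg: "dist c g = r" using cr(3) by simp
  have "x = g + (\<delta> / r) *\<^sub>R (g - c)"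
    by (rule tangent_point[OF cr(1) \<delta> xg cg]) (use farx cr(2) in blast)
  moreover have "z = g + (\<delta> / r) *\<^sub>R (g - c)"
    by (rule tangent_point[OF cr(1) \<delta> zg cg]) (use farz cr(2) in blast)
  ultimately show "x \<in> C" using z(1) by simp
qed

lemma infdist_below_on_connected:
  fixes G \<Omega> :: "'a::metric_space set"
  assumes "connected \<Omega>" "G \<subseteq> \<Omega>" "G \<noteq> {}" "\<delta> > 0"
    and avoid: "\<And>x. x \<in> \<Omega> \<Longrightarrow> infdist x G \<noteq> \<delta>" and "x \<in> \<Omega>"
  shows "infdist x G < \<delta>"
proof -
  define A where "A = {x. infdist x G < \<delta>}"
  define B where "B = {x. \<delta> < infdist x G}"
  have "open A" "open B" unfolding A_def B_def by (intro open_Collect_less continuous_intros)+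
  moreover have "A \<inter> B \<inter> \<Omega> = {}" "\<Omega> \<subseteq> A \<union> B"
    using avoid by (fastforce simp: A_def B_def)+
  moreover have "A \<inter> \<Omega> \<noteq> {}"
  proof -
    obtain g where "g \<in> G" using assms(3) by blast
    then have "g \<in> A \<inter> \<Omega>" using assms(2,4) by (simp add: A_def subset_iff)
    then show ?thesis by blast
  qed
  ultimately have "B \<inter> \<Omega> = {}" using connectedD[OF assms(1)] by blast
  then have "\<not> \<delta> < infdist x G" using assms(6) by (auto simp: B_def)
  then show ?thesis using avoid[OF assms(6)] by linarith
qed

theorem lemma2p8:
  fixes \<Omega> G :: "'a::euclidean_space set" and \<delta> :: real
  assumes "is_domain \<Omega>" and "bounded \<Omega>" and "\<delta> > 0"
    and "is_domain G" and "closure G \<subseteq> \<Omega>"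
    and "C1_boundary G" and "interior_sphere_condition G"
    and "frontier G = Gamma \<Omega> \<delta>"
  shows "\<Omega> = {x + y | x y. x \<in> G \<and> y \<in> ball 0 \<delta>}
    \<and> (\<forall>\<xi> lam. norm \<xi> = 1 \<longrightarrow> refl_hp \<xi> lam ` cap G \<xi> lam \<subseteq> G
            \<longrightarrow> refl_hp \<xi> lam ` cap \<Omega> \<xi> lam \<subseteq> \<Omega>)"
proof -
  have "- \<Omega> \<noteq> {}"
    using assms(2) not_bounded_UNIV Compl_empty_eq double_complement by metis
  then have \<Omega>: "open \<Omega>" "connected \<Omega>" "- \<Omega> \<noteq> {}"
    using assms(1) by (simp_all add: is_domain_def)
  have G: "open G" "G \<noteq> {}" "G \<subseteq> \<Omega>"
    using assms(4,5) closure_subset by (auto simp: is_domain_def)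
  have front: "infdist p (- \<Omega>) = \<delta>" if "p \<in> frontier G" for p
    using assms(8) that by (auto simp: Gamma_def dist_bdry_def)
  have inner: "infdist p (- \<Omega>) \<ge> \<delta>" if "p \<in> G" for p
    using infdist_ge_from_frontier[of "- \<Omega>" G] G(3) \<Omega>(3) front that by fastforce
  have "infdist x G \<noteq> \<delta>" if "x \<in> \<Omega>" for x
    using level_set_in_closed[OF G(1) assms(7) assms(3) _ \<Omega>(3) inner front] \<Omega>(1) that
    by (auto simp: closed_Compl)
  then have "\<exists>g\<in>G. dist x g < \<delta>" if "x \<in> \<Omega>" for x
    using infdist_below_on_connected[OF \<Omega>(2) G(3,2) assms(3)] infdist_lessE[OF G(2)] that
    by metis
  then have "\<Omega> \<subseteq> {x + y | x y. x \<in> G \<and> y \<in> ball 0 \<delta>}"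
    unfolding subset_eq mem_sum_ball_iff by blast
  moreover have "{x + y | x y. x \<in> G \<and> y \<in> ball 0 \<delta>} \<subseteq> \<Omega>"
    using sum_ball_subset[OF \<Omega>(3) G(3)] front by simp
  ultimately have sum: "\<Omega> = {x + y | x y. x \<in> G \<and> y \<in> ball 0 \<delta>}" by blast
  then show ?thesis using sum_ball_reflection by blast
qed

end
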